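(* Let $R>0$ and let $f\colon\mathbb{R}\to(0,\infty)$ be a continuously differentiable convex function. Put $\alpha(t)=\dfrac{tf'(t)-f(t)}{\sqrt{1+f'(t)^2}}$ and $C^+=\{t>0\mid\alpha(t)\ge R\}$. If $t_0\in C^+$, then $\alpha(t)\ge\alpha(t_0)$ for every $t>t_0$; in particular $t\in C^+$ for every $t>t_0$. *)

theory Defs
  imports "HOL-Analysis.Analysis"
begin

definition alpha_fun :: "(real \<Rightarrow> real) \<Rightarrow> (real \<Rightarrow> real) \<Rightarrow> real \<Rightarrow> real" where
  "alpha_fun f f' t = (t * f' t - f t) / sqrt (1 + (f' t)^2)"

definition Cplus :: "(real \<Rightarrow> real) \<Rightarrow> (real \<Rightarrow> real) \<Rightarrow> real \<Rightarrow> real set" where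
  "Cplus f f' R = {t. t > 0 \<and> alpha_fun f f' t \<ge> R}"

end

theory Submission
  imports Defs
begin

text \<open>Up to sign, \<open>alpha_fun f f' t\<close> is the distance from the origin to the tangent line of
  the graph of \<open>f\<close> at \<open>t\<close>: its numerator is minus the intercept \<open>f t - t * f' t\<close>, its denominator
  the length of the direction vector \<open>(1, f' t)\<close>. For \<open>s < t\<close>, convexity makes the slope grow,
  \<open>f' s \<le> f' t\<close>, and the tangent at \<open>t\<close> stays below \<open>f\<close> at \<open>s\<close>, so the numerator grows by at
  least \<open>s * (f' t - f' s)\<close>. When \<open>alpha_fun f f' s > 0\<close> and \<open>f s \<ge> 0\<close> the slope \<open>f' s\<close> is positive,
  and this growth beats the growth of the denominator, because \<open>x / sqrt (1 + x\<^sup>2)\<close> is increasing.\<close>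

lemma convex_on_UNIV_above_tangent:
  fixes f f' :: "real \<Rightarrow> real"
  assumes "convex_on UNIV f" and "\<And>x. (f has_real_derivative f' x) (at x)"
  shows "f' c * (x - c) \<le> f x - f c"
  by (rule convex_on_imp_above_tangent[OF assms(1)])
     (auto intro: has_field_derivative_at_within assms(2))

lemma convex_on_UNIV_derivative_mono:
  fixes f f' :: "real \<Rightarrow> real"
  assumes "convex_on UNIV f" and "\<And>x. (f has_real_derivative f' x) (at x)" and "s \<le> t"
  shows "f' s \<le> f' t"
proof (cases "s = t")
  case False
  have "f' s * (t - s) \<le> f t - f s" "f' t * (s - t) \<le> f s - f t"
    using convex_on_UNIV_above_tangent[OF assms(1,2)] by auto
  then have "f' s * (t - s) \<le> f' t * (t - s)"
    by (simp add: algebra_simps)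
  then show ?thesis
    using False \<open>s \<le> t\<close> by simp
qed simp

lemma divide_sqrt_one_plus_square_mono:
  fixes x y :: real
  assumes "x \<le> y"
  shows "x / sqrt (1 + x\<^sup>2) \<le> y / sqrt (1 + y\<^sup>2)"
proof -
  have sqrt_mult_le: "u * sqrt (1 + v\<^sup>2) \<le> v * sqrt (1 + u\<^sup>2)" if "0 \<le> u" "u \<le> v" for u v :: real
  proof -
    have "u\<^sup>2 * (1 + v\<^sup>2) \<le> v\<^sup>2 * (1 + u\<^sup>2)"
      using power_mono[OF that(2,1), of 2] by (simp add: algebra_simps)
    then have "sqrt (u\<^sup>2 * (1 + v\<^sup>2)) \<le> sqrt (v\<^sup>2 * (1 + u\<^sup>2))"
      by (rule real_sqrt_le_mono)
    then show ?thesis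
      using that by (simp add: real_sqrt_mult)
  qed
  have pos: "sqrt (1 + z\<^sup>2) > 0" for z :: real
    by (simp add: add_pos_nonneg)
  consider "0 \<le> x" | "y \<le> 0" | "x < 0" "0 < y"
    by linarith
  then have "x * sqrt (1 + y\<^sup>2) \<le> y * sqrt (1 + x\<^sup>2)"
  proof cases
    case 1
    then show ?thesis using sqrt_mult_le assms by blast
  next
    case 2
    then show ?thesis using sqrt_mult_le[of "-y" "-x"] assms by simp
  next
    case 3
    then show ?thesis
      by (smt (verit) mult_neg_pos mult_pos_pos pos)
  qed
  then show ?thesis
    using pos by (simp add: divide_simps)
qed

lemma alpha_fun_mono_convex:
  fixes f f' :: "real \<Rightarrow> real"
  assumes convex: "convex_on UNIV f" and deriv: "\<And>x. (f has_real_derivative f' x) (at x)"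
    and "0 < s" and "0 \<le> f s" and alpha_pos: "0 < alpha_fun f f' s" and "s \<le> t"
  shows "alpha_fun f f' s \<le> alpha_fun f f' t"
proof -
  define p q a b where "p = f' s" and "q = f' t"
    and "a = s * f' s - f s" and "b = t * f' t - f t"
  have "0 < a"
    using alpha_pos
    by (auto simp: alpha_fun_def a_def zero_less_divide_iff) (smt (verit) zero_le_power2)
  have "p \<le> q"
    unfolding p_def q_def by (rule convex_on_UNIV_derivative_mono[OF convex deriv \<open>s \<le> t\<close>])
  have "a + s * (q - p) \<le> b"
    using convex_on_UNIV_above_tangent[OF convex deriv, of t s]
    by (simp add: a_def b_def p_def q_def algebra_simps)
  have "a \<le> s * p"
    using \<open>0 \<le> f s\<close> by (simp add: a_def p_def)
  then have "0 < s * p"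
    using \<open>0 < a\<close> by linarith
  then have "0 < p"
    using \<open>0 < s\<close> by (simp add: zero_less_mult_iff)
  have "a * q = a * p + a * (q - p)"
    by (simp add: algebra_simps)
  also have "\<dots> \<le> a * p + s * p * (q - p)"
    using \<open>a \<le> s * p\<close> \<open>p \<le> q\<close> by (simp add: mult_right_mono)
  also have "\<dots> \<le> b * p"
    using mult_right_mono[OF \<open>a + s * (q - p) \<le> b\<close>, of p] \<open>0 < p\<close> by (simp add: algebra_simps)
  finally have "a / p * q \<le> b"
    using \<open>0 < p\<close> by (simp add: field_simps)
  have "a / sqrt (1 + p\<^sup>2) = a / p * (p / sqrt (1 + p\<^sup>2))"
    using \<open>0 < p\<close> by simp
  also have "\<dots> \<le> a / p * (q / sqrt (1 + q\<^sup>2))"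
    using \<open>0 < a\<close> \<open>0 < p\<close>
    by (intro mult_left_mono divide_sqrt_one_plus_square_mono \<open>p \<le> q\<close>) simp
  also have "\<dots> \<le> b / sqrt (1 + q\<^sup>2)"
    using divide_right_mono[OF \<open>a / p * q \<le> b\<close>, of "sqrt (1 + q\<^sup>2)"] by simp
  finally show ?thesis
    by (simp add: alpha_fun_def a_def b_def p_def q_def)
qed

theorem lemma3:
  fixes f f' :: "real \<Rightarrow> real" and R t0 :: real
  assumes "R > 0"
    and "\<And>t. f t > 0"
    and "\<And>t. (f has_real_derivative f' t) (at t)"
    and "continuous_on UNIV f'"
    and "convex_on UNIV f"
    and "t0 \<in> Cplus f f' R"
  shows "\<forall>t > t0. alpha_fun f f' t \<ge> alpha_fun f f' t0 \<and> t \<in> Cplus f f' R"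
proof (intro allI impI)
  fix t assume "t > t0"
  have "0 < t0" and "R \<le> alpha_fun f f' t0"
    using assms(6) by (auto simp: Cplus_def)
  then have "alpha_fun f f' t0 \<le> alpha_fun f f' t"
    using alpha_fun_mono_convex[OF assms(5,3)] assms(1,2) \<open>t > t0\<close>
    by (simp add: less_imp_le)
  with \<open>0 < t0\<close> \<open>R \<le> alpha_fun f f' t0\<close> \<open>t > t0\<close>
  show "alpha_fun f f' t \<ge> alpha_fun f f' t0 \<and> t \<in> Cplus f f' R"
    by (simp add: Cplus_def)
qed

end
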